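(* There exist absolute constants $a,b>0$ such that the following holds. Let $0<\epsilon\le\Delta\le1$ and let $G$ be an $n\times n$ bimatrix game with payoffs in $[0,1]$ that has at most $n^{a(\Delta/\epsilon)^2}$ Nash equilibria and satisfies the well-supported $(\epsilon,\Delta)$-approximation stability condition (or the $(\epsilon/2,\Delta)$-stability to perturbations condition). Then: (1) every Nash equilibrium of $G$ is $8\Delta$-close to a pair of mixed strategies each with support of size at most $b(\Delta/\epsilon)^2\log(1+\Delta^{-1})\log n$; (2) for every game $G'$ within $L_\infty$ distance $\epsilon/2$ of $G$, every Nash equilibrium of $G'$ is $9\Delta$-close to a pair of mixed strategies each with support of size at most $b(\Delta/\epsilon)^2\log(1+\Delta^{-1})\log n$.
   Context: Bimatrix game: row payoff $R_{i,j}$, column payoff $C_{i,j}$; mixed strategies $p,q$ are probability vectors, payoffs $p^TRq$, $p^TCq$; $e_i$ is the $i$-th unit vector; $\mathrm{supp}(p)=\{i:p_i>0\}$. Nash equilibrium: $e_i^TRq\le p^TRq$ and $p^TCe_j\le p^TCq$ for all $i,j$. Well-supported $\epsilon$-equilibrium: for every $i\in\mathrm{supp}(p)$ and all $j$, $e_i^TRq\ge e_j^TRq-\epsilon$, and for every $i\in\mathrm{supp}(q)$ and all $j$, $p^TCe_i\ge p^TCe_j-\epsilon$. Distance $d(p,p')=\frac12\sum_i|p_i-p'_i|$, $d((p,q),(p',q'))=\max(d(p,p'),d(q,q'))$; $\Delta$-close means distance $\le\Delta$. $G'$ (matrices $R',C'$) is within $L_\infty$ distance $\alpha$ of $G$ (an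 $L_\infty$ $\alpha$-perturbation) if $|R_{i,j}-R'_{i,j}|\le\alpha$ and $|C_{i,j}-C'_{i,j}|\le\alpha$ for all $i,j$ (entries need not be in $[0,1]$). $(\epsilon,\Delta)$-stability to perturbations: for every $L_\infty$ $\epsilon$-perturbation $G'$ of $G$, every Nash equilibrium of $G'$ is $\Delta$-close to some Nash equilibrium of $G$. Well-supported $(\epsilon,\Delta)$-approximation stability: every well-supported $\epsilon$-equilibrium of $G$ is $\Delta$-close to some Nash equilibrium of $G$. $\log$ is natural. *)

theory Defs
  imports "HOL-Analysis.Analysis"
begin

text \<open>n x n bimatrix games: strategies indexed by {..<n}; payoff matrices
  nat => nat => real (only entries with indices < n matter).\<close>

definition mixed :: "nat \<Rightarrow> (nat \<Rightarrow> real) \<Rightarrow> bool" where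
  "mixed n p \<longleftrightarrow> (\<forall>i<n. 0 \<le> p i) \<and> (\<forall>i\<ge>n. p i = 0) \<and> (\<Sum>i<n. p i) = 1"

definition supp :: "nat \<Rightarrow> (nat \<Rightarrow> real) \<Rightarrow> nat set" where
  "supp n p = {i. i < n \<and> p i > 0}"

definition unit_vec :: "nat \<Rightarrow> nat \<Rightarrow> real" where
  "unit_vec i = (\<lambda>k. if k = i then 1 else 0)"

definition payoff :: "nat \<Rightarrow> (nat \<Rightarrow> nat \<Rightarrow> real) \<Rightarrow> (nat \<Rightarrow> real) \<Rightarrow> (nat \<Rightarrow> real) \<Rightarrow> real" where
  "payoff n M p q = (\<Sum>i<n. \<Sum>j<n. p i * M i j * q j)"

definition nash :: "nat \<Rightarrow> (nat \<Rightarrow> nat \<Rightarrow> real) \<Rightarrow> (nat \<Rightarrow> nat \<Rightarrow> real)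
                    \<Rightarrow> (nat \<Rightarrow> real) \<Rightarrow> (nat \<Rightarrow> real) \<Rightarrow> bool" where
  "nash n R C p q \<longleftrightarrow> mixed n p \<and> mixed n q \<and>
     (\<forall>i<n. payoff n R (unit_vec i) q \<le> payoff n R p q) \<and>
     (\<forall>j<n. payoff n C p (unit_vec j) \<le> payoff n C p q)"

definition ws_eq :: "nat \<Rightarrow> (nat \<Rightarrow> nat \<Rightarrow> real) \<Rightarrow> (nat \<Rightarrow> nat \<Rightarrow> real)
                    \<Rightarrow> real \<Rightarrow> (nat \<Rightarrow> real) \<Rightarrow> (nat \<Rightarrow> real) \<Rightarrow> bool" where
  "ws_eq n R C \<epsilon> p q \<longleftrightarrow> mixed n p \<and> mixed n q \<and>
     (\<forall>i\<in>supp n p. \<forall>j<n. payoff n R (unit_vec i) q \<ge> payoff n R (unit_vec j) q - \<epsilon>) \<and>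
     (\<forall>i\<in>supp n q. \<forall>j<n. payoff n C p (unit_vec i) \<ge> payoff n C p (unit_vec j) - \<epsilon>)"

definition sdist :: "nat \<Rightarrow> (nat \<Rightarrow> real) \<Rightarrow> (nat \<Rightarrow> real) \<Rightarrow> real" where
  "sdist n p p' = (\<Sum>i<n. \<bar>p i - p' i\<bar>) / 2"

definition pdist :: "nat \<Rightarrow> (nat \<Rightarrow> real) \<times> (nat \<Rightarrow> real) \<Rightarrow> (nat \<Rightarrow> real) \<times> (nat \<Rightarrow> real) \<Rightarrow> real" where
  "pdist n pq pq' = max (sdist n (fst pq) (fst pq')) (sdist n (snd pq) (snd pq'))"

definition nash_set :: "nat \<Rightarrow> (nat \<Rightarrow> nat \<Rightarrow> real) \<Rightarrow> (nat \<Rightarrow> nat \<Rightarrow> real)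
                        \<Rightarrow> ((nat \<Rightarrow> real) \<times> (nat \<Rightarrow> real)) set" where
  "nash_set n R C = {(p, q). nash n R C p q}"

definition perturb :: "nat \<Rightarrow> real \<Rightarrow> (nat \<Rightarrow> nat \<Rightarrow> real) \<Rightarrow> (nat \<Rightarrow> nat \<Rightarrow> real)
                       \<Rightarrow> (nat \<Rightarrow> nat \<Rightarrow> real) \<Rightarrow> (nat \<Rightarrow> nat \<Rightarrow> real) \<Rightarrow> bool" where
  "perturb n \<alpha> R C R' C' \<longleftrightarrow>
     (\<forall>i<n. \<forall>j<n. \<bar>R i j - R' i j\<bar> \<le> \<alpha> \<and> \<bar>C i j - C' i j\<bar> \<le> \<alpha>)"

definition ws_approx_stable :: "nat \<Rightarrow> (nat \<Rightarrow> nat \<Rightarrow> real) \<Rightarrow> (nat \<Rightarrow> nat \<Rightarrow> real)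
                                \<Rightarrow> real \<Rightarrow> real \<Rightarrow> bool" where
  "ws_approx_stable n R C \<epsilon> \<Delta> \<longleftrightarrow>
     (\<forall>p q. ws_eq n R C \<epsilon> p q \<longrightarrow> (\<exists>pq'\<in>nash_set n R C. pdist n (p, q) pq' \<le> \<Delta>))"

definition perturb_stable :: "nat \<Rightarrow> (nat \<Rightarrow> nat \<Rightarrow> real) \<Rightarrow> (nat \<Rightarrow> nat \<Rightarrow> real)
                              \<Rightarrow> real \<Rightarrow> real \<Rightarrow> bool" where
  "perturb_stable n R C \<epsilon> \<Delta> \<longleftrightarrow>
     (\<forall>R' C'. perturb n \<epsilon> R C R' C' \<longrightarrow>
        (\<forall>p q. nash n R' C' p q \<longrightarrow> (\<exists>pq'\<in>nash_set n R C. pdist n (p, q) pq' \<le> \<Delta>)))"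

end

theory Submission
  imports Defs "HOL-Probability.Hoeffding"
begin

text \<open>
  Let \<open>(p, q)\<close> be a Nash equilibrium. Every \<open>p'\<close> supported inside \<open>supp p\<close> whose column
  payoffs differ from those of \<open>p\<close> by at most \<open>\<epsilon> / 2\<close> makes \<open>(p', q)\<close> a well-supported
  \<open>\<epsilon>\<close>-equilibrium, so by stability \<open>p'\<close> is \<open>\<Delta>\<close>-close to one of the few equilibria.
  If a part of \<open>p\<close> of mass \<open>> 8 \<Delta>\<close> consisted of weights that are each at most a \<open>1 / M\<close>
  fraction of it, \<open>M \<approx> (\<Delta> / \<epsilon>)\<^sup>2 log n\<close>, then multiplying these weights by \<open>1 \<plusminus> l\<close> with random
  signs and renormalising would, by Hoeffding's inequality, give such a deviation for half of
  all sign vectors, while two of them near the same equilibrium have strongly correlated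
  signs, which happens only for an \<open>exp (- M / 18)\<close> fraction; this would require more than
  \<open>n powr (\<Delta> / \<epsilon>)\<^sup>2\<close> equilibria. Hence greedily collecting the coordinates carrying at least a
  \<open>1 / M\<close> fraction of the remaining mass leaves at most \<open>8 \<Delta>\<close> after \<open>M log (1 / \<Delta>)\<close> steps;
  moving the rest onto one coordinate gives the sparse strategy. The column player is the row
  player of the transposed game. Stability to perturbations implies well-supported approximation
  stability, and a Nash equilibrium of an \<open>\<epsilon> / 2\<close>-perturbation is a well-supported
  \<open>\<epsilon>\<close>-equilibrium of the game, which costs one more \<open>\<Delta>\<close>.
\<close>

section \<open>Hoeffding's inequality for sign vectors\<close>

lemma cosh_le_exp_half_sq:
  fixes x :: real
  shows "cosh x \<le> exp (x\<^sup>2 / 2)"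
proof -
  have "cosh y \<le> exp (y\<^sup>2 / 2)" if "y \<ge> 0" for y :: real
  proof -
    have "- (2*y) * (1/2) + ln (1 + (1/2) * (exp (2*y) - 1)) \<le> (2*y)\<^sup>2 / 8"
      using Hoeffdings_lemma_aux[of "2*y" "1/2"] that by simp
    hence "ln ((exp (2*y) + 1) / 2) \<le> ln (exp (y + y\<^sup>2/2))"
      by (simp add: power2_eq_square field_simps)
    hence "(exp (2*y) + 1) / 2 \<le> exp (y + y\<^sup>2/2)"
      by (subst (asm) ln_le_cancel_iff) (auto intro: add_pos_pos)
    hence "(exp (2*y) + 1) / 2 * exp (-y) \<le> exp (y + y\<^sup>2/2) * exp (-y)"
      by (intro mult_right_mono) auto
    thus ?thesis
      by (simp add: cosh_def field_simps flip: exp_add)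
  qed
  from this[of "\<bar>x\<bar>"] show ?thesis
    by (cases "x \<ge> 0") simp_all
qed

definition signs :: "'a set \<Rightarrow> ('a \<Rightarrow> real) set" where
  "signs L = PiE L (\<lambda>_. {-1, 1})"

lemma finite_signs: "finite L \<Longrightarrow> finite (signs L)"
  unfolding signs_def by (simp add: finite_PiE)

lemma card_signs: "finite L \<Longrightarrow> card (signs L) = 2 ^ card L"
  unfolding signs_def by (simp add: card_PiE numeral_2_eq_2)

lemma signs_cases: "\<sigma> \<in> signs L \<Longrightarrow> i \<in> L \<Longrightarrow> \<sigma> i = -1 \<or> \<sigma> i = 1"
  unfolding signs_def by (auto simp: PiE_iff)

lemma signs_mult_self: "\<sigma> \<in> signs L \<Longrightarrow> i \<in> L \<Longrightarrow> \<sigma> i * \<sigma> i = 1"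
  using signs_cases by fastforce

lemma sum_exp_signs_le:
  fixes a :: "'a \<Rightarrow> real"
  assumes "finite L"
  shows "(\<Sum>\<sigma>\<in>signs L. exp (\<theta> * (\<Sum>i\<in>L. \<sigma> i * a i)))
          \<le> 2 ^ card L * exp (\<theta>\<^sup>2 * (\<Sum>i\<in>L. (a i)\<^sup>2) / 2)"
proof -
  have "(\<Sum>\<sigma>\<in>signs L. exp (\<theta> * (\<Sum>i\<in>L. \<sigma> i * a i)))
      = (\<Sum>\<sigma>\<in>signs L. \<Prod>i\<in>L. exp (\<theta> * (\<sigma> i * a i)))"
    using assms by (simp add: sum_distrib_left exp_sum)
  also have "\<dots> = (\<Prod>i\<in>L. \<Sum>s\<in>{-1,1::real}. exp (\<theta> * (s * a i)))"
    unfolding signs_def using assms by (subst prod_sum_PiE) auto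
  also have "\<dots> = (\<Prod>i\<in>L. 2 * cosh (\<theta> * a i))"
    by (intro prod.cong refl) (simp add: cosh_def field_simps)
  also have "\<dots> \<le> (\<Prod>i\<in>L. 2 * exp ((\<theta> * a i)\<^sup>2 / 2))"
    by (intro prod_mono conjI mult_left_mono cosh_le_exp_half_sq) auto
  also have "\<dots> = 2 ^ card L * exp (\<theta>\<^sup>2 * (\<Sum>i\<in>L. (a i)\<^sup>2) / 2)"
    using assms
    by (simp add: prod.distrib exp_sum power_mult_distrib sum_distrib_left sum_divide_distrib)
  finally show ?thesis .
qed

lemma card_signs_sum_ge:
  fixes a :: "'a \<Rightarrow> real"
  assumes "finite L" "t \<ge> 0" "V > 0" "(\<Sum>i\<in>L. (a i)\<^sup>2) \<le> V"
  shows "real (card {\<sigma>\<in>signs L. t \<le> (\<Sum>i\<in>L. \<sigma> i * a i)}) \<le> exp (- t\<^sup>2 / (2 * V)) * 2 ^ card L"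
proof -
  define \<theta> where "\<theta> = t / V"
  define A where "A = {\<sigma>\<in>signs L. t \<le> (\<Sum>i\<in>L. \<sigma> i * a i)}"
  have \<theta>: "\<theta> \<ge> 0" using assms unfolding \<theta>_def by simp
  have "real (card A) = (\<Sum>\<sigma>\<in>A. 1)" by simp
  also have "\<dots> \<le> (\<Sum>\<sigma>\<in>A. exp (\<theta> * (\<Sum>i\<in>L. \<sigma> i * a i) - \<theta> * t))"
    by (intro sum_mono) (auto simp: A_def \<theta> mult_left_mono simp flip: right_diff_distrib)
  also have "\<dots> \<le> (\<Sum>\<sigma>\<in>signs L. exp (\<theta> * (\<Sum>i\<in>L. \<sigma> i * a i) - \<theta> * t))"
    by (intro sum_mono2 finite_signs assms) (auto simp: A_def)
  also have "\<dots> = exp (- \<theta> * t) * (\<Sum>\<sigma>\<in>signs L. exp (\<theta> * (\<Sum>i\<in>L. \<sigma> i * a i)))"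
    unfolding sum_distrib_left by (intro sum.cong refl) (simp add: mult_exp_exp)
  also have "\<dots> \<le> exp (- \<theta> * t) * (2 ^ card L * exp (\<theta>\<^sup>2 * V / 2))"
  proof -
    have "exp (\<theta>\<^sup>2 * (\<Sum>i\<in>L. (a i)\<^sup>2) / 2) \<le> exp (\<theta>\<^sup>2 * V / 2)"
      using assms(4) by (simp add: mult_left_mono)
    hence "(\<Sum>\<sigma>\<in>signs L. exp (\<theta> * (\<Sum>i\<in>L. \<sigma> i * a i))) \<le> 2 ^ card L * exp (\<theta>\<^sup>2 * V / 2)"
      using sum_exp_signs_le[OF assms(1), of \<theta> a]
      by (meson mult_left_mono order_trans zero_le_power zero_le_numeral)
    thus ?thesis by (intro mult_left_mono) auto
  qed
  also have "\<dots> = exp (- t\<^sup>2 / (2 * V)) * 2 ^ card L"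
    using assms(3) by (simp add: \<theta>_def mult_exp_exp field_simps power2_eq_square)
  finally show ?thesis unfolding A_def .
qed

lemma card_signs_abs_sum_ge:
  fixes a :: "'a \<Rightarrow> real"
  assumes "finite L" "t \<ge> 0" "V > 0" "(\<Sum>i\<in>L. (a i)\<^sup>2) \<le> V"
  shows "real (card {\<sigma>\<in>signs L. t \<le> \<bar>\<Sum>i\<in>L. \<sigma> i * a i\<bar>})
           \<le> 2 * exp (- t\<^sup>2 / (2 * V)) * 2 ^ card L"
proof -
  let ?P = "{\<sigma>\<in>signs L. t \<le> (\<Sum>i\<in>L. \<sigma> i * a i)}"
  let ?N = "{\<sigma>\<in>signs L. t \<le> (\<Sum>i\<in>L. \<sigma> i * - a i)}"
  have "{\<sigma>\<in>signs L. t \<le> \<bar>\<Sum>i\<in>L. \<sigma> i * a i\<bar>} \<subseteq> ?P \<union> ?N"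
    by (auto simp: sum_negf abs_if)
  moreover have "finite ?P" "finite ?N"
    by (auto intro: finite_subset[OF _ finite_signs[OF assms(1)]])
  ultimately have "card {\<sigma>\<in>signs L. t \<le> \<bar>\<Sum>i\<in>L. \<sigma> i * a i\<bar>} \<le> card ?P + card ?N"
    by (meson card_Un_le card_mono finite_UnI order_trans)
  also have "real \<dots> \<le> 2 * exp (- t\<^sup>2 / (2 * V)) * 2 ^ card L"
    using card_signs_sum_ge[OF assms] card_signs_sum_ge[OF assms(1-3), of "\<lambda>i. - a i"] assms(4)
    by simp
  finally show ?thesis by linarith
qed

section \<open>Payoffs and transposed games\<close>

definition mtranspose :: "(nat \<Rightarrow> nat \<Rightarrow> real) \<Rightarrow> nat \<Rightarrow> nat \<Rightarrow> real" where
  "mtranspose M i j = M j i"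

definition best_reply :: "nat \<Rightarrow> (nat \<Rightarrow> nat \<Rightarrow> real) \<Rightarrow> (nat \<Rightarrow> real) \<Rightarrow> (nat \<Rightarrow> real) \<Rightarrow> bool" where
  "best_reply n R p q \<longleftrightarrow> (\<forall>i<n. payoff n R (unit_vec i) q \<le> payoff n R p q)"

definition ws_reply :: "nat \<Rightarrow> (nat \<Rightarrow> nat \<Rightarrow> real) \<Rightarrow> real \<Rightarrow> (nat \<Rightarrow> real) \<Rightarrow> (nat \<Rightarrow> real) \<Rightarrow> bool" where
  "ws_reply n R \<epsilon> p q \<longleftrightarrow>
     (\<forall>i\<in>supp n p. \<forall>j<n. payoff n R (unit_vec j) q - \<epsilon> \<le> payoff n R (unit_vec i) q)"

lemma mixed_nonneg: "mixed n p \<Longrightarrow> 0 \<le> p i"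
  unfolding mixed_def by (metis linorder_not_le order_refl)

lemma mixed_unit_vec: "i < n \<Longrightarrow> mixed n (unit_vec i)"
  unfolding mixed_def unit_vec_def by auto

lemma supp_subset_lessThan: "supp n p \<subseteq> {..<n}"
  unfolding supp_def by auto

lemma payoff_unit_vec:
  assumes "i < n"
  shows "payoff n R (unit_vec i) q = (\<Sum>j<n. R i j * q j)"
proof -
  have "payoff n R (unit_vec i) q = (\<Sum>k<n. if k = i then (\<Sum>j<n. R k j * q j) else 0)"
    unfolding payoff_def unit_vec_def by (intro sum.cong refl) auto
  also have "\<dots> = (\<Sum>j<n. R i j * q j)" using assms by simp
  finally show ?thesis .
qed

lemma payoff_eq_sum_unit_vec: "payoff n R p q = (\<Sum>i<n. p i * payoff n R (unit_vec i) q)"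
proof -
  have "payoff n R p q = (\<Sum>i<n. p i * (\<Sum>j<n. R i j * q j))"
    by (simp add: payoff_def sum_distrib_left mult.assoc)
  also have "\<dots> = (\<Sum>i<n. p i * payoff n R (unit_vec i) q)"
    by (intro sum.cong refl) (simp add: payoff_unit_vec)
  finally show ?thesis .
qed

lemma payoff_mtranspose: "payoff n (mtranspose M) q p = payoff n M p q"
  unfolding payoff_def mtranspose_def by (subst sum.swap) (simp add: ac_simps)

lemma nash_iff_best_reply:
  "nash n R C p q \<longleftrightarrow>
     mixed n p \<and> mixed n q \<and> best_reply n R p q \<and> best_reply n (mtranspose C) q p"
  unfolding nash_def best_reply_def payoff_mtranspose ..

lemma ws_eq_iff_ws_reply:
  "ws_eq n R C \<epsilon> p q \<longleftrightarrow>
     mixed n p \<and> mixed n q \<and> ws_reply n R \<epsilon> p q \<and> ws_reply n (mtranspose C) \<epsilon> q p"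
  unfolding ws_eq_def ws_reply_def payoff_mtranspose ..

lemma mtranspose_mtranspose [simp]: "mtranspose (mtranspose M) = M"
  by (simp add: mtranspose_def fun_eq_iff)

lemma nash_mtranspose: "nash n (mtranspose C) (mtranspose R) q p \<longleftrightarrow> nash n R C p q"
  unfolding nash_iff_best_reply by auto

lemma ws_eq_mtranspose: "ws_eq n (mtranspose C) (mtranspose R) \<epsilon> q p \<longleftrightarrow> ws_eq n R C \<epsilon> p q"
  unfolding ws_eq_iff_ws_reply by auto

lemma pdist_swap: "pdist n (q, p) (q', p') = pdist n (p, q) (p', q')"
  unfolding pdist_def by simp

lemma nash_set_mtranspose:
  "nash_set n (mtranspose C) (mtranspose R) = (\<lambda>(p, q). (q, p)) ` nash_set n R C"
  unfolding nash_set_def by (auto simp: nash_mtranspose image_iff)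

lemma card_nash_set_mtranspose:
  "card (nash_set n (mtranspose C) (mtranspose R)) = card (nash_set n R C)"
  unfolding nash_set_mtranspose by (intro card_image) (auto simp: inj_on_def)

lemma ws_approx_stable_mtranspose:
  assumes "ws_approx_stable n R C \<epsilon> \<Delta>"
  shows "ws_approx_stable n (mtranspose C) (mtranspose R) \<epsilon> \<Delta>"
  unfolding ws_approx_stable_def
proof (intro allI impI)
  fix q p assume "ws_eq n (mtranspose C) (mtranspose R) \<epsilon> q p"
  then obtain p' q' where "nash n R C p' q'" "pdist n (p, q) (p', q') \<le> \<Delta>"
    using assms unfolding ws_eq_mtranspose ws_approx_stable_def nash_set_def by fast
  thus "\<exists>pq'\<in>nash_set n (mtranspose C) (mtranspose R). pdist n (q, p) pq' \<le> \<Delta>"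
    by (intro bexI[of _ "(q', p')"]) (simp_all add: nash_set_def nash_mtranspose pdist_swap)
qed

lemma sdist_commute: "sdist n p p' = sdist n p' p"
  unfolding sdist_def by (simp add: abs_minus_commute)

lemma sdist_triangle: "sdist n p r \<le> sdist n p p' + sdist n p' r"
proof -
  have "(\<Sum>i<n. \<bar>p i - r i\<bar>) \<le> (\<Sum>i<n. \<bar>p i - p' i\<bar> + \<bar>p' i - r i\<bar>)"
    by (intro sum_mono) linarith
  thus ?thesis unfolding sdist_def by (simp add: sum.distrib)
qed

lemma sdist_le_double_if_common:
  "sdist n x e \<le> \<Delta> \<Longrightarrow> sdist n y e \<le> \<Delta> \<Longrightarrow> sdist n x y \<le> 2 * \<Delta>"
  using sdist_triangle[of n x y e] sdist_commute[of n e y] by linarith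

lemma pdist_triangle: "pdist n x z \<le> pdist n x y + pdist n y z"
  unfolding pdist_def
  using sdist_triangle[of n "fst x" "fst z" "fst y"] sdist_triangle[of n "snd x" "snd z" "snd y"]
  by auto

section \<open>Best replies under perturbation\<close>

lemma best_reply_supp_eq:
  assumes "mixed n p" "best_reply n R p q" "i \<in> supp n p"
  shows "payoff n R (unit_vec i) q = payoff n R p q"
proof -
  define v where "v = payoff n R p q"
  define x where "x k = payoff n R (unit_vec k) q" for k
  have i: "i < n" "p i > 0" using assms(3) unfolding supp_def by auto
  have "(\<Sum>k<n. p k * (v - x k)) = v * (\<Sum>k<n. p k) - (\<Sum>k<n. p k * x k)"
    by (simp add: right_diff_distrib sum_subtractf sum_distrib_left mult.commute)
  also have "\<dots> = 0"
    using assms(1) by (simp add: mixed_def v_def x_def flip: payoff_eq_sum_unit_vec)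
  finally have "(\<Sum>k<n. p k * (v - x k)) = 0" .
  moreover have "\<forall>k\<in>{..<n}. 0 \<le> p k * (v - x k)"
    using assms(1,2) by (auto simp: best_reply_def mixed_nonneg v_def x_def)
  ultimately have "p i * (v - x i) = 0"
    using i(1) sum_nonneg_eq_0_iff[of "{..<n}" "\<lambda>k. p k * (v - x k)"] by simp
  thus ?thesis using i(2) by (simp add: v_def x_def)
qed

lemma ws_reply_of_best_reply:
  assumes "mixed n p" "best_reply n R p q" "0 \<le> \<epsilon>"
  shows "ws_reply n R \<epsilon> p q"
  using assms best_reply_supp_eq[OF assms(1,2)]
  unfolding ws_reply_def best_reply_def by fastforce

lemma ws_reply_supp_mono:
  "supp n p' \<subseteq> supp n p \<Longrightarrow> ws_reply n R \<epsilon> p q \<Longrightarrow> ws_reply n R \<epsilon> p' q"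
  unfolding ws_reply_def by blast

lemma ws_reply_close:
  assumes "\<forall>i<n. \<bar>payoff n R (unit_vec i) q - payoff n R' (unit_vec i) q'\<bar> \<le> \<delta>"
    and "ws_reply n R' \<epsilon> p q'"
  shows "ws_reply n R (\<epsilon> + 2 * \<delta>) p q"
  unfolding ws_reply_def
proof (intro ballI allI impI)
  fix i j assume ij: "i \<in> supp n p" "j < n"
  hence "payoff n R' (unit_vec j) q' - \<epsilon> \<le> payoff n R' (unit_vec i) q'"
    using assms(2) unfolding ws_reply_def by blast
  moreover have "i < n" using ij(1) by (simp add: supp_def)
  hence "\<bar>payoff n R (unit_vec i) q - payoff n R' (unit_vec i) q'\<bar> \<le> \<delta>"
    "\<bar>payoff n R (unit_vec j) q - payoff n R' (unit_vec j) q'\<bar> \<le> \<delta>"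
    using assms(1) ij(2) by blast+
  ultimately show "payoff n R (unit_vec j) q - (\<epsilon> + 2 * \<delta>) \<le> payoff n R (unit_vec i) q"
    by linarith
qed

lemma payoff_perturb_le:
  assumes "\<forall>i<n. \<forall>j<n. \<bar>R i j - R' i j\<bar> \<le> \<alpha>" "mixed n p" "mixed n q"
  shows "\<bar>payoff n R p q - payoff n R' p q\<bar> \<le> \<alpha>"
proof -
  have "\<bar>payoff n R p q - payoff n R' p q\<bar> = \<bar>\<Sum>i<n. \<Sum>j<n. p i * (R i j - R' i j) * q j\<bar>"
    unfolding payoff_def by (simp add: sum_subtractf algebra_simps)
  also have "\<dots> \<le> (\<Sum>i<n. \<Sum>j<n. \<bar>p i * (R i j - R' i j) * q j\<bar>)"
    by (rule order_trans[OF sum_abs]) (intro sum_mono sum_abs)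
  also have "\<dots> \<le> (\<Sum>i<n. \<Sum>j<n. p i * \<alpha> * q j)"
    using assms
    by (intro sum_mono) (auto simp: abs_mult mixed_nonneg intro!: mult_right_mono mult_left_mono)
  also have "\<dots> = \<alpha>"
    using assms(2,3) unfolding mixed_def
    by (simp add: sum_distrib_left[symmetric] sum_distrib_right[symmetric] mult.assoc)
  finally show ?thesis .
qed

lemma payoff_unit_vec_shift:
  assumes "mixed n q" "i < n"
  shows "payoff n (\<lambda>i j. R i j + c i) (unit_vec i) q = payoff n R (unit_vec i) q + c i"
proof -
  have "payoff n (\<lambda>i j. R i j + c i) (unit_vec i) q = (\<Sum>j<n. R i j * q j) + c i * (\<Sum>j<n. q j)"
    using assms(2) by (simp add: payoff_unit_vec distrib_right sum.distrib sum_distrib_left)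
  thus ?thesis using assms by (simp add: mixed_def payoff_unit_vec)
qed

text \<open>Rows in the support are shifted to the level \<open>max - \<epsilon> / 2\<close>, all other rows are lowered
  by \<open>\<epsilon> / 2\<close>.\<close>

lemma exists_shift_best_reply:
  assumes p: "mixed n p" and q: "mixed n q" and ws: "ws_reply n R \<epsilon> p q" and "0 \<le> \<epsilon>"
  shows "\<exists>R'. (\<forall>i<n. \<forall>j<n. \<bar>R i j - R' i j\<bar> \<le> \<epsilon> / 2) \<and> best_reply n R' p q"
proof -
  define x where "x i = payoff n R (unit_vec i) q" for i
  define v where "v = Max (x ` {..<n})"
  define c where "c i = (if i \<in> supp n p then v - \<epsilon>/2 - x i else - \<epsilon>/2)" for i
  define R' where "R' = (\<lambda>i j. R i j + c i)"
  have "n \<noteq> 0" using p unfolding mixed_def by (cases n) auto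
  hence "v \<in> x ` {..<n}" unfolding v_def by (intro Max_in) auto
  then obtain i0 where i0: "i0 < n" "v = x i0" by auto
  have x_le: "x i \<le> v" if "i < n" for i
    unfolding v_def using that by (intro Max_ge) auto
  have c: "\<bar>c i\<bar> \<le> \<epsilon> / 2" if "i < n" for i
  proof (cases "i \<in> supp n p")
    case True
    hence "x i0 - \<epsilon> \<le> x i" using ws i0(1) unfolding ws_reply_def x_def by blast
    moreover have "c i = v - \<epsilon>/2 - x i" using True by (simp add: c_def)
    ultimately show ?thesis using i0(2) x_le[OF that] unfolding abs_le_iff by linarith
  qed (use \<open>0 \<le> \<epsilon>\<close> in \<open>simp add: c_def\<close>)
  have R'_row: "payoff n R' (unit_vec i) q = x i + c i" if "i < n" for i
    unfolding R'_def x_def using payoff_unit_vec_shift[OF q that] .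
  have weighted_row: "p i * payoff n R' (unit_vec i) q = p i * (v - \<epsilon> / 2)" if "i < n" for i
  proof (cases "i \<in> supp n p")
    case False
    hence "p i = 0" using that mixed_nonneg[OF p, of i] by (simp add: supp_def)
    thus ?thesis by simp
  qed (simp add: R'_row[OF that] c_def)
  have "payoff n R' p q = (\<Sum>i<n. p i * (v - \<epsilon> / 2))"
    unfolding payoff_eq_sum_unit_vec[of n R' p q] using weighted_row by (intro sum.cong refl) simp
  also have "\<dots> = v - \<epsilon> / 2"
    using p by (simp add: mixed_def flip: sum_distrib_right)
  finally have "best_reply n R' p q"
    unfolding best_reply_def using R'_row x_le by (auto simp: c_def)
  moreover have "\<forall>i<n. \<forall>j<n. \<bar>R i j - R' i j\<bar> \<le> \<epsilon> / 2"
    using c by (simp add: R'_def)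
  ultimately show ?thesis by blast
qed

lemma ws_eq_of_nash_perturb:
  assumes "perturb n (\<epsilon> / 2) R C R' C'" "nash n R' C' p q"
  shows "ws_eq n R C \<epsilon> p q"
proof -
  have p: "mixed n p" and q: "mixed n q"
    and br: "best_reply n R' p q" "best_reply n (mtranspose C') q p"
    using assms(2) unfolding nash_iff_best_reply by auto
  have "\<forall>i<n. \<bar>payoff n R (unit_vec i) q - payoff n R' (unit_vec i) q\<bar> \<le> \<epsilon> / 2"
    using assms(1) q unfolding perturb_def by (blast intro: payoff_perturb_le mixed_unit_vec)
  moreover have "\<forall>j<n. \<bar>payoff n (mtranspose C) (unit_vec j) p
                       - payoff n (mtranspose C') (unit_vec j) p\<bar> \<le> \<epsilon> / 2"
    using assms(1) p unfolding perturb_def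
    by (intro allI impI payoff_perturb_le mixed_unit_vec) (auto simp: mtranspose_def)
  ultimately have "ws_reply n R (0 + 2 * (\<epsilon> / 2)) p q"
    "ws_reply n (mtranspose C) (0 + 2 * (\<epsilon> / 2)) q p"
    using ws_reply_close ws_reply_of_best_reply p q br by blast+
  thus ?thesis using p q by (simp add: ws_eq_iff_ws_reply)
qed

lemma perturb_stable_imp_ws_approx_stable:
  assumes "perturb_stable n R C (\<epsilon> / 2) \<Delta>" "0 \<le> \<epsilon>"
  shows "ws_approx_stable n R C \<epsilon> \<Delta>"
  unfolding ws_approx_stable_def
proof (intro allI impI)
  fix p q assume "ws_eq n R C \<epsilon> p q"
  hence p: "mixed n p" and q: "mixed n q"
    and ws: "ws_reply n R \<epsilon> p q" "ws_reply n (mtranspose C) \<epsilon> q p"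
    unfolding ws_eq_iff_ws_reply by auto
  obtain R' where R': "\<forall>i<n. \<forall>j<n. \<bar>R i j - R' i j\<bar> \<le> \<epsilon> / 2" "best_reply n R' p q"
    using exists_shift_best_reply[OF p q ws(1) assms(2)] by blast
  obtain C' where C': "\<forall>i<n. \<forall>j<n. \<bar>mtranspose C i j - C' i j\<bar> \<le> \<epsilon> / 2" "best_reply n C' q p"
    using exists_shift_best_reply[OF q p ws(2) assms(2)] by blast
  have "perturb n (\<epsilon> / 2) R C R' (mtranspose C')"
    using R'(1) C'(1) by (auto simp: perturb_def mtranspose_def)
  moreover have "nash n R' (mtranspose C') p q"
    using p q R'(2) C'(2) by (simp add: nash_iff_best_reply)
  ultimately show "\<exists>pq'\<in>nash_set n R C. pdist n (p, q) pq' \<le> \<Delta>"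
    using assms(1) unfolding perturb_stable_def by blast
qed

lemma ws_eq_of_nash_deviation:
  assumes "nash n R C p q" "mixed n p'" "supp n p' \<subseteq> supp n p" "0 \<le> \<epsilon>"
    and "\<forall>j<n. \<bar>(\<Sum>i<n. p' i * C i j) - (\<Sum>i<n. p i * C i j)\<bar> \<le> \<epsilon> / 2"
  shows "ws_eq n R C \<epsilon> p' q"
proof -
  have p: "mixed n p" and q: "mixed n q"
    and br: "best_reply n R p q" "best_reply n (mtranspose C) q p"
    using assms(1) unfolding nash_iff_best_reply by auto
  have "ws_reply n R \<epsilon> p' q"
    using ws_reply_supp_mono[OF assms(3) ws_reply_of_best_reply[OF p br(1) assms(4)]] .
  moreover have "\<forall>j<n. \<bar>payoff n (mtranspose C) (unit_vec j) p'
                       - payoff n (mtranspose C) (unit_vec j) p\<bar> \<le> \<epsilon> / 2"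
    using assms(5) by (simp add: payoff_unit_vec mtranspose_def mult.commute)
  hence "ws_reply n (mtranspose C) (0 + 2 * (\<epsilon> / 2)) q p'"
    using ws_reply_close ws_reply_of_best_reply[OF q br(2)] by blast
  ultimately show ?thesis using assms(2) q by (simp add: ws_eq_iff_ws_reply)
qed

section \<open>Random sign perturbations\<close>

lemma sum_if_mem_subset:
  fixes f :: "nat \<Rightarrow> real"
  assumes "L \<subseteq> {..<n}"
  shows "(\<Sum>i<n. if i \<in> L then f i else 0) = sum f L"
  using assms by (simp add: sum.inter_restrict[symmetric] Int_absorb1)

definition signed_mass :: "nat set \<Rightarrow> (nat \<Rightarrow> real) \<Rightarrow> (nat \<Rightarrow> real) \<Rightarrow> real" where
  "signed_mass L p \<sigma> = (\<Sum>i\<in>L. \<sigma> i * p i)"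

definition sign_tilt :: "nat set \<Rightarrow> real \<Rightarrow> (nat \<Rightarrow> real) \<Rightarrow> (nat \<Rightarrow> real) \<Rightarrow> nat \<Rightarrow> real" where
  "sign_tilt L l p \<sigma> i = p i + l * (if i \<in> L then \<sigma> i * p i else 0)"

definition sign_perturb :: "nat set \<Rightarrow> real \<Rightarrow> (nat \<Rightarrow> real) \<Rightarrow> (nat \<Rightarrow> real) \<Rightarrow> nat \<Rightarrow> real" where
  "sign_perturb L l p \<sigma> i = sign_tilt L l p \<sigma> i / (1 + l * signed_mass L p \<sigma>)"

lemma sign_tilt_nonneg:
  assumes "mixed n p" "\<sigma> \<in> signs L" "0 \<le> l" "l \<le> 1"
  shows "0 \<le> sign_tilt L l p \<sigma> i"
proof -
  have "0 \<le> p i" using assms(1) by (rule mixed_nonneg)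
  moreover have "l * p i \<le> p i" using \<open>0 \<le> p i\<close> assms(3,4) by (simp add: mult_left_le_one_le)
  moreover have "\<sigma> i = -1 \<or> \<sigma> i = 1" if "i \<in> L" using signs_cases[OF assms(2) that] .
  ultimately show ?thesis
    using assms(3) by (auto simp: sign_tilt_def)
qed

lemma sum_sign_tilt:
  assumes "mixed n p" "L \<subseteq> {..<n}"
  shows "(\<Sum>i<n. sign_tilt L l p \<sigma> i) = 1 + l * signed_mass L p \<sigma>"
  using assms(1)
  by (simp add: sign_tilt_def signed_mass_def mixed_def sum.distrib sum_if_mem_subset[OF assms(2)]
      flip: sum_distrib_left)

lemma sign_perturb_mixed:
  assumes "mixed n p" "L \<subseteq> {..<n}" "\<sigma> \<in> signs L" "0 \<le> l" "l \<le> 1"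
    and "\<bar>l * signed_mass L p \<sigma>\<bar> < 1"
  shows "mixed n (sign_perturb L l p \<sigma>)"
proof -
  have D: "1 + l * signed_mass L p \<sigma> > 0" using assms(6) by linarith
  have "(\<Sum>i<n. sign_perturb L l p \<sigma> i) = 1"
    using sum_sign_tilt[OF assms(1,2)] D by (simp add: sign_perturb_def flip: sum_divide_distrib)
  moreover have "sign_perturb L l p \<sigma> i = 0" if "n \<le> i" for i
    using assms(1,2) that by (auto simp: sign_perturb_def sign_tilt_def mixed_def)
  ultimately show ?thesis
    using sign_tilt_nonneg[OF assms(1,3-5)] D by (auto simp: mixed_def sign_perturb_def)
qed

lemma supp_sign_perturb_subset:
  assumes "L \<subseteq> supp n p" "1 + l * signed_mass L p \<sigma> > 0"
  shows "supp n (sign_perturb L l p \<sigma>) \<subseteq> supp n p"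
  using assms by (auto simp: supp_def sign_perturb_def sign_tilt_def zero_less_divide_iff)

lemma sign_perturb_payoff_diff:
  fixes a :: "nat \<Rightarrow> real"
  assumes "L \<subseteq> {..<n}" "1 + l * signed_mass L p \<sigma> \<noteq> 0"
  shows "(\<Sum>i<n. sign_perturb L l p \<sigma> i * a i) - (\<Sum>i<n. p i * a i)
         = l * ((\<Sum>i\<in>L. \<sigma> i * (p i * a i)) - signed_mass L p \<sigma> * (\<Sum>i<n. p i * a i))
           / (1 + l * signed_mass L p \<sigma>)"
proof -
  have "sign_tilt L l p \<sigma> i * a i = p i * a i + l * (if i \<in> L then \<sigma> i * (p i * a i) else 0)"
    for i by (simp add: sign_tilt_def algebra_simps)
  hence "(\<Sum>i<n. sign_tilt L l p \<sigma> i * a i)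
        = (\<Sum>i<n. p i * a i) + l * (\<Sum>i<n. if i \<in> L then \<sigma> i * (p i * a i) else 0)"
    by (simp add: sum.distrib sum_distrib_left)
  also have "(\<Sum>i<n. if i \<in> L then \<sigma> i * (p i * a i) else 0) = (\<Sum>i\<in>L. \<sigma> i * (p i * a i))"
    by (rule sum_if_mem_subset[OF assms(1)])
  finally show ?thesis
    using assms(2) by (simp add: sign_perturb_def field_simps flip: sum_divide_distrib)
qed

lemma sign_perturb_payoff_close:
  fixes a :: "nat \<Rightarrow> real"
  assumes "mixed n p" "L \<subseteq> {..<n}" "0 < l" "\<forall>i<n. a i \<in> {0..1}"
    and "l * \<eta> \<le> 1/5" "\<bar>signed_mass L p \<sigma>\<bar> \<le> \<eta>" "\<bar>\<Sum>i\<in>L. \<sigma> i * (p i * a i)\<bar> \<le> \<eta>"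
  shows "\<bar>(\<Sum>i<n. sign_perturb L l p \<sigma> i * a i) - (\<Sum>i<n. p i * a i)\<bar> \<le> 5/2 * (l * \<eta>)"
proof -
  define P where "P = (\<Sum>i<n. p i * a i)"
  define X where "X = (\<Sum>i\<in>L. \<sigma> i * (p i * a i))"
  define s where "s = signed_mass L p \<sigma>"
  have "0 \<le> P" unfolding P_def using assms(4) mixed_nonneg[OF assms(1)] by (auto intro!: sum_nonneg)
  moreover have "P \<le> (\<Sum>i<n. p i)"
    unfolding P_def using assms(4) mixed_nonneg[OF assms(1)] by (intro sum_mono) (auto intro: mult_left_le)
  ultimately have P: "0 \<le> P" "P \<le> 1" using assms(1) by (auto simp: mixed_def)
  have ls: "\<bar>l * s\<bar> \<le> l * \<eta>"
    using assms(3,6) by (simp add: abs_mult s_def)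
  hence D: "4/5 \<le> 1 + l * s" using assms(5) by linarith
  have "\<bar>s * P\<bar> \<le> \<eta>"
    using P assms(6) by (simp add: abs_mult s_def) (meson mult_left_le order_trans abs_ge_zero)
  hence "\<bar>X - s * P\<bar> \<le> 2 * \<eta>" using assms(7) unfolding X_def by linarith
  hence "\<bar>l * (X - s * P)\<bar> \<le> l * (2 * \<eta>)"
    using assms(3) by (simp add: abs_mult)
  hence "\<bar>l * (X - s * P)\<bar> / (1 + l * s) \<le> l * (2 * \<eta>) / (4/5)"
    using D ls by (intro frac_le) (auto simp: mult.commute[of \<eta>] intro: order_trans[OF abs_ge_zero])
  hence "\<bar>l * (X - s * P) / (1 + l * s)\<bar> \<le> l * (2 * \<eta>) / (4/5)"
    using D by simp
  moreover have "(\<Sum>i<n. sign_perturb L l p \<sigma> i * a i) - P = l * (X - s * P) / (1 + l * s)"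
    using sign_perturb_payoff_diff[OF assms(2)] D by (simp add: P_def X_def s_def)
  ultimately show ?thesis unfolding P_def by (simp add: mult.commute)
qed

lemma sum_abs_diff_divide:
  fixes y :: "nat \<Rightarrow> real"
  assumes "\<And>i. 0 \<le> y i" "(\<Sum>i<n. y i) = e" "0 < e"
  shows "(\<Sum>i<n. \<bar>y i - y i / e\<bar>) = \<bar>e - 1\<bar>"
proof -
  have "(\<Sum>i<n. \<bar>y i - y i / e\<bar>) = (\<Sum>i<n. y i * \<bar>1 - 1 / e\<bar>)"
  proof (intro sum.cong refl)
    fix i
    have "y i - y i / e = y i * (1 - 1 / e)" by (simp add: right_diff_distrib)
    thus "\<bar>y i - y i / e\<bar> = y i * \<bar>1 - 1 / e\<bar>" using assms(1)[of i] by (simp add: abs_mult)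
  qed
  also have "\<dots> = \<bar>e * (1 - 1 / e)\<bar>"
    using assms(2,3) by (simp add: abs_mult flip: sum_distrib_right)
  also have "e * (1 - 1 / e) = e - 1"
    using assms(3) by (simp add: right_diff_distrib)
  finally show ?thesis .
qed

lemma abs_signs_diff:
  "\<sigma> \<in> signs L \<Longrightarrow> \<sigma>' \<in> signs L \<Longrightarrow> i \<in> L \<Longrightarrow> \<bar>\<sigma> i - \<sigma>' i\<bar> = 1 - \<sigma>' i * \<sigma> i"
  using signs_cases[of \<sigma> L i] signs_cases[of \<sigma>' L i] by auto

text \<open>The unnormalised tilts are \<open>l \<Sum>\<^sub>L \<bar>\<sigma> i - \<sigma>' i\<bar> p i\<close> apart, and normalising moves each of
  them by \<open>\<bar>l * signed_mass L p \<sigma>\<bar>\<close> in \<open>L\<^sub>1\<close>.\<close>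

lemma sign_perturb_sdist_ge:
  assumes p: "mixed n p" and L: "L \<subseteq> {..<n}" and \<sigma>: "\<sigma> \<in> signs L" "\<sigma>' \<in> signs L"
    and l: "0 \<le> l" "l \<le> 1"
    and D: "1 + l * signed_mass L p \<sigma> > 0" "1 + l * signed_mass L p \<sigma>' > 0"
  shows "l * (sum p L - (\<Sum>i\<in>L. \<sigma>' i * (\<sigma> i * p i)))
           - \<bar>l * signed_mass L p \<sigma>\<bar> - \<bar>l * signed_mass L p \<sigma>'\<bar>
         \<le> 2 * sdist n (sign_perturb L l p \<sigma>) (sign_perturb L l p \<sigma>')"
proof -
  define x where "x = sign_tilt L l p \<sigma>"
  define x' where "x' = sign_tilt L l p \<sigma>'"
  define d where "d = 1 + l * signed_mass L p \<sigma>"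
  define d' where "d' = 1 + l * signed_mass L p \<sigma>'"
  have normalise: "(\<Sum>i<n. \<bar>x i - x i / d\<bar>) = \<bar>l * signed_mass L p \<sigma>\<bar>"
    "(\<Sum>i<n. \<bar>x' i - x' i / d'\<bar>) = \<bar>l * signed_mass L p \<sigma>'\<bar>"
    using sum_abs_diff_divide[of x n d] sum_abs_diff_divide[of x' n d']
      sign_tilt_nonneg[OF p \<sigma>(1) l] sign_tilt_nonneg[OF p \<sigma>(2) l] sum_sign_tilt[OF p L] D
    by (simp_all add: x_def x'_def d_def d'_def)
  have "\<bar>x i - x' i\<bar> = (if i \<in> L then l * ((1 - \<sigma>' i * \<sigma> i) * p i) else 0)" for i
  proof (cases "i \<in> L")
    case True
    have "x i - x' i = l * ((\<sigma> i - \<sigma>' i) * p i)"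
      using True by (simp add: x_def x'_def sign_tilt_def algebra_simps)
    thus ?thesis
      using True l mixed_nonneg[OF p, of i] abs_signs_diff[OF \<sigma> True] by (simp add: abs_mult)
  qed (simp add: x_def x'_def sign_tilt_def)
  hence "(\<Sum>i<n. \<bar>x i - x' i\<bar>) = (\<Sum>i\<in>L. l * ((1 - \<sigma>' i * \<sigma> i) * p i))"
    by (simp add: sum_if_mem_subset[OF L])
  also have "\<dots> = l * (sum p L - (\<Sum>i\<in>L. \<sigma>' i * (\<sigma> i * p i)))"
    by (simp add: sum_subtractf left_diff_distrib mult.assoc flip: sum_distrib_left)
  finally have tilt_dist: "(\<Sum>i<n. \<bar>x i - x' i\<bar>) = l * (sum p L - (\<Sum>i\<in>L. \<sigma>' i * (\<sigma> i * p i)))" .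
  have "\<bar>x i - x' i\<bar> - \<bar>x i - x i / d\<bar> - \<bar>x' i - x' i / d'\<bar> \<le> \<bar>x i / d - x' i / d'\<bar>" for i
    by linarith
  hence "(\<Sum>i<n. \<bar>x i - x' i\<bar>) - (\<Sum>i<n. \<bar>x i - x i / d\<bar>) - (\<Sum>i<n. \<bar>x' i - x' i / d'\<bar>)
        \<le> (\<Sum>i<n. \<bar>x i / d - x' i / d'\<bar>)"
    by (simp add: sum_mono flip: sum_subtractf)
  moreover have "(\<Sum>i<n. \<bar>x i / d - x' i / d'\<bar>) = 2 * sdist n (sign_perturb L l p \<sigma>) (sign_perturb L l p \<sigma>')"
    by (simp add: sdist_def sign_perturb_def x_def x'_def d_def d'_def)
  ultimately show ?thesis using normalise tilt_dist by linarith
qed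

section \<open>Strategies with a flat heavy part\<close>

definition stable_deviations ::
  "nat \<Rightarrow> (nat \<Rightarrow> nat \<Rightarrow> real) \<Rightarrow> real \<Rightarrow> real \<Rightarrow> (nat \<Rightarrow> real) set \<Rightarrow> (nat \<Rightarrow> real) \<Rightarrow> bool"
where
  "stable_deviations n A \<epsilon> \<Delta> E p \<longleftrightarrow>
     (\<forall>p'. mixed n p' \<and> supp n p' \<subseteq> supp n p \<and>
           (\<forall>j<n. \<bar>(\<Sum>i<n. p' i * A i j) - (\<Sum>i<n. p i * A i j)\<bar> \<le> \<epsilon> / 2)
       \<longrightarrow> (\<exists>e\<in>E. sdist n p' e \<le> \<Delta>))"

lemma card_le_card_mult_fibre_bound:
  assumes "finite A" "finite E" "f ` A \<subseteq> E" "\<And>e. e \<in> E \<Longrightarrow> real (card {x\<in>A. f x = e}) \<le> \<beta>"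
  shows "real (card A) \<le> real (card E) * \<beta>"
proof -
  have "real (card A) = (\<Sum>e\<in>E. real (card {x\<in>A. f x = e}))"
    using sum.group[OF assms(1-3), of "\<lambda>_. 1::real"] by simp
  also have "\<dots> \<le> (\<Sum>e\<in>E. \<beta>)" by (intro sum_mono assms(4))
  finally show ?thesis by simp
qed

lemma card_good_signs:
  fixes A :: "nat \<Rightarrow> nat \<Rightarrow> real"
  assumes L: "L \<subseteq> {..<n}" and A: "\<forall>i\<in>L. \<forall>j<n. A i j \<in> {0..1}"
    and "0 \<le> \<eta>" "0 < V" and V: "(\<Sum>i\<in>L. (p i)\<^sup>2) \<le> V"
  shows "(1 - 2 * (real n + 1) * exp (- \<eta>\<^sup>2 / (2 * V))) * 2 ^ card L
         \<le> real (card {\<sigma>\<in>signs L. \<bar>signed_mass L p \<sigma>\<bar> < \<eta> \<and>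
                                 (\<forall>j<n. \<bar>\<Sum>i\<in>L. \<sigma> i * (p i * A i j)\<bar> < \<eta>)})"
    (is "_ \<le> real (card ?Good)")
proof -
  define \<beta> where "\<beta> = 2 * exp (- \<eta>\<^sup>2 / (2 * V)) * 2 ^ card L"
  define B where "B j = {\<sigma>\<in>signs L. \<eta> \<le> \<bar>\<Sum>i\<in>L. \<sigma> i * (p i * A i j)\<bar>}" for j
  define B0 where "B0 = {\<sigma>\<in>signs L. \<eta> \<le> \<bar>\<Sum>i\<in>L. \<sigma> i * p i\<bar>}"
  have fL: "finite L" using L finite_subset by blast
  have fS: "finite (signs L)" by (rule finite_signs[OF fL])
  have "card B0 \<le> \<beta>"
    unfolding B0_def \<beta>_def using card_signs_abs_sum_ge[OF fL assms(3,4) V] .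
  moreover have "card (B j) \<le> \<beta>" if "j < n" for j
  proof -
    have "(p i * A i j)\<^sup>2 \<le> (p i)\<^sup>2" if "i \<in> L" for i
      using A \<open>j < n\<close> that by (simp add: power_mult_distrib mult_left_le power_le_one)
    hence "(\<Sum>i\<in>L. (p i * A i j)\<^sup>2) \<le> (\<Sum>i\<in>L. (p i)\<^sup>2)" by (rule sum_mono)
    thus ?thesis unfolding B_def \<beta>_def using V by (intro card_signs_abs_sum_ge fL assms(3,4)) simp
  qed
  ultimately have bad_bound: "real (card B0) + (\<Sum>j<n. real (card (B j))) \<le> (real n + 1) * \<beta>"
    using sum_mono[of "{..<n}" "\<lambda>j. real (card (B j))" "\<lambda>_. \<beta>"] by (simp add: algebra_simps)
  have "signs L - ?Good \<subseteq> B0 \<union> (\<Union>j<n. B j)"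
    by (auto simp: B0_def B_def signed_mass_def not_less)
  moreover have "B0 \<union> (\<Union>j<n. B j) \<subseteq> signs L" unfolding B0_def B_def by blast
  ultimately have "card (signs L - ?Good) \<le> card (B0 \<union> (\<Union>j<n. B j))"
    using fS by (meson card_mono finite_subset)
  also have "\<dots> \<le> card B0 + card (\<Union>j<n. B j)" by (rule card_Un_le)
  also have "\<dots> \<le> card B0 + (\<Sum>j<n. card (B j))" using card_UN_le[of "{..<n}" B] by simp
  finally have "real (card (signs L - ?Good)) \<le> real (card B0) + (\<Sum>j<n. real (card (B j)))"
    using of_nat_mono by fastforce
  with bad_bound have bad: "real (card (signs L - ?Good)) \<le> (real n + 1) * \<beta>" by linarith
  have "card ?Good \<le> card (signs L)" using fS by (intro card_mono) auto
  hence "real (card ?Good) + real (card (signs L - ?Good)) = 2 ^ card L"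
    using fS card_signs[OF fL] by (simp add: card_Diff_subset finite_subset)
  moreover have "(1 - 2 * (real n + 1) * exp (- \<eta>\<^sup>2 / (2 * V))) * 2 ^ card L
                 = 2 ^ card L - (real n + 1) * \<beta>"
    by (simp add: \<beta>_def algebra_simps)
  ultimately show ?thesis using bad by linarith
qed

lemma sign_perturb_close_correlated:
  assumes p: "mixed n p" and L: "L \<subseteq> {..<n}" and \<sigma>: "\<sigma> \<in> signs L" "\<sigma>0 \<in> signs L"
    and \<Delta>: "0 < \<Delta>" "\<Delta> \<le> 1" and m: "sum p L = m" "0 < m"
    and l: "l = 15 * \<Delta> / (2 * m)" "l \<le> 1"
    and small: "\<bar>l * signed_mass L p \<sigma>\<bar> \<le> \<Delta> / 5" "\<bar>l * signed_mass L p \<sigma>0\<bar> \<le> \<Delta> / 5"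
    and close: "sdist n (sign_perturb L l p \<sigma>0) (sign_perturb L l p \<sigma>) \<le> 2 * \<Delta>"
  shows "m / 3 \<le> (\<Sum>i\<in>L. \<sigma> i * (\<sigma>0 i * p i))"
proof -
  define S where "S = (\<Sum>i\<in>L. \<sigma> i * (\<sigma>0 i * p i))"
  have "0 \<le> l" using l \<Delta> m by simp
  moreover have "1 + l * signed_mass L p \<sigma>0 > 0" "1 + l * signed_mass L p \<sigma> > 0"
    using small \<Delta> by linarith+
  ultimately have "l * (m - S) - \<Delta> / 5 - \<Delta> / 5 \<le> 2 * (2 * \<Delta>)"
    using sign_perturb_sdist_ge[OF p L \<sigma>(2,1) _ l(2)] small close m(1)
    unfolding S_def by fastforce
  hence "15 * \<Delta> * (m - S) \<le> 44 / 5 * \<Delta> * m"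
    using m(2) by (simp add: l(1) field_simps)
  hence "15 * (m - S) \<le> 44 / 5 * m"
    using \<Delta>(1) by (simp add: mult.assoc)
  thus ?thesis using m(2) by (simp add: S_def)
qed

lemma exp_neg_six_ln_le:
  assumes "2 \<le> n"
  shows "2 * (real n + 1) * exp (- (6 * ln (real n))) \<le> 1 / 2"
proof -
  have "exp (6 * ln (real n)) = real n ^ 6"
    using assms exp_of_nat_mult[of 6 "ln (real n)"] by simp
  moreover have "4 * (real n + 1) \<le> real n ^ 6"
  proof -
    have "real n * 2 ^ 5 \<le> real n * real n ^ 5"
      using assms by (intro mult_left_mono power_mono) auto
    thus ?thesis using assms by (simp add: power_Suc[symmetric] del: power_Suc)
  qed
  ultimately show ?thesis using assms by (simp add: exp_minus field_simps)
qed

lemma powr_mult_exp_le: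
  assumes "2 \<le> n" "1 \<le> r"
  shows "real n powr r\<^sup>2 * exp (- (16875 * r\<^sup>2 * ln (real n)) / 18) \<le> 1 / 4"
proof -
  have "0 < ln (2::real)" by simp
  moreover have "1 * ln 2 \<le> r\<^sup>2 * ln (real n)"
    using assms \<open>0 < ln 2\<close> by (intro mult_mono) auto
  ultimately have "r\<^sup>2 * ln (real n) + - (16875 * r\<^sup>2 * ln (real n)) / 18 \<le> - (2 * ln 2)"
    by linarith
  hence "exp (r\<^sup>2 * ln (real n) + - (16875 * r\<^sup>2 * ln (real n)) / 18) \<le> exp (- (2 * ln 2))"
    by (simp only: exp_le_cancel_iff)
  also have "exp (- (2 * ln 2)) = (1 / 4 :: real)"
    using exp_of_nat_mult[of 2 "ln (2::real)"] by (simp add: exp_minus)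
  also have "real n powr r\<^sup>2 = exp (r\<^sup>2 * ln (real n))"
    using assms(1) by (simp add: powr_def)
  ultimately show ?thesis by (simp only: mult_exp_exp)
qed

lemma sign_perturb_admissible:
  fixes A :: "nat \<Rightarrow> nat \<Rightarrow> real"
  assumes p: "mixed n p" and L: "L \<subseteq> supp n p" and A: "\<forall>i<n. \<forall>j<n. A i j \<in> {0..1}"
    and l: "0 < l" "l \<le> 1" "l * \<eta> = \<epsilon> / 5" and "\<epsilon> \<le> 1"
    and \<sigma>: "\<sigma> \<in> signs L" "\<bar>signed_mass L p \<sigma>\<bar> < \<eta>"
      "\<forall>j<n. \<bar>\<Sum>i\<in>L. \<sigma> i * (p i * A i j)\<bar> < \<eta>"
  shows "\<bar>l * signed_mass L p \<sigma>\<bar> \<le> \<epsilon> / 5"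
    and "mixed n (sign_perturb L l p \<sigma>) \<and> supp n (sign_perturb L l p \<sigma>) \<subseteq> supp n p \<and>
         (\<forall>j<n. \<bar>(\<Sum>i<n. sign_perturb L l p \<sigma> i * A i j) - (\<Sum>i<n. p i * A i j)\<bar> \<le> \<epsilon> / 2)"
proof -
  have Ln: "L \<subseteq> {..<n}" using L supp_subset_lessThan by blast
  show small: "\<bar>l * signed_mass L p \<sigma>\<bar> \<le> \<epsilon> / 5"
    using mult_left_mono[OF less_imp_le[OF \<sigma>(2)], of l] l by (simp add: abs_mult)
  hence "\<bar>l * signed_mass L p \<sigma>\<bar> < 1" using \<open>\<epsilon> \<le> 1\<close> by linarith
  have "\<bar>(\<Sum>i<n. sign_perturb L l p \<sigma> i * A i j) - (\<Sum>i<n. p i * A i j)\<bar> \<le> \<epsilon> / 2" if "j < n" for j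
    using sign_perturb_payoff_close[OF p Ln l(1), of "\<lambda>i. A i j" \<eta> \<sigma>] A that \<sigma> l \<open>\<epsilon> \<le> 1\<close>
    by auto
  moreover have "mixed n (sign_perturb L l p \<sigma>)"
    using sign_perturb_mixed[OF p Ln \<sigma>(1)] l \<open>\<bar>l * signed_mass L p \<sigma>\<bar> < 1\<close> by simp
  moreover have "supp n (sign_perturb L l p \<sigma>) \<subseteq> supp n p"
    using supp_sign_perturb_subset[OF L] \<open>\<bar>l * signed_mass L p \<sigma>\<bar> < 1\<close> by simp
  ultimately show "mixed n (sign_perturb L l p \<sigma>) \<and> supp n (sign_perturb L l p \<sigma>) \<subseteq> supp n p \<and>
         (\<forall>j<n. \<bar>(\<Sum>i<n. sign_perturb L l p \<sigma> i * A i j) - (\<Sum>i<n. p i * A i j)\<bar> \<le> \<epsilon> / 2)"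
    by blast
qed

lemma card_sign_perturb_near:
  assumes p: "mixed n p" and L: "L \<subseteq> {..<n}" and \<Delta>: "0 < \<Delta>" "\<Delta> \<le> 1"
    and m: "0 < sum p L" and l: "l = 15 * \<Delta> / (2 * sum p L)" "l \<le> 1"
    and V: "0 < V" "(\<Sum>i\<in>L. (p i)\<^sup>2) \<le> V"
  shows "real (card {\<sigma>\<in>signs L. \<bar>l * signed_mass L p \<sigma>\<bar> \<le> \<Delta> / 5 \<and>
                                 sdist n (sign_perturb L l p \<sigma>) e \<le> \<Delta>})
         \<le> exp (- (sum p L)\<^sup>2 / (18 * V)) * 2 ^ card L"
    (is "real (card ?S) \<le> _")
proof (cases "?S = {}")
  case True
  thus ?thesis by (simp only: card.empty) simp
next
  case False
  then obtain \<sigma>0 where \<sigma>0: "\<sigma>0 \<in> signs L" "\<bar>l * signed_mass L p \<sigma>0\<bar> \<le> \<Delta> / 5"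
    "sdist n (sign_perturb L l p \<sigma>0) e \<le> \<Delta>"
    by blast
  have fL: "finite L" using L finite_subset by blast
  have "?S \<subseteq> {\<sigma>\<in>signs L. sum p L / 3 \<le> (\<Sum>i\<in>L. \<sigma> i * (\<sigma>0 i * p i))}"
    using sign_perturb_close_correlated[OF p L _ \<sigma>0(1) \<Delta> refl m l _ \<sigma>0(2)]
      sdist_le_double_if_common[OF \<sigma>0(3)] by blast
  hence "card ?S \<le> card {\<sigma>\<in>signs L. sum p L / 3 \<le> (\<Sum>i\<in>L. \<sigma> i * (\<sigma>0 i * p i))}"
    using finite_signs[OF fL] by (intro card_mono) auto
  also have "real \<dots> \<le> exp (- (sum p L / 3)\<^sup>2 / (2 * V)) * 2 ^ card L"
  proof (rule card_signs_sum_ge[OF fL _ V(1)])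
    have "(\<sigma>0 i * p i)\<^sup>2 = (p i)\<^sup>2" if "i \<in> L" for i
      using signs_mult_self[OF \<sigma>0(1) that] by (simp add: power2_eq_square algebra_simps)
    thus "(\<Sum>i\<in>L. (\<sigma>0 i * p i)\<^sup>2) \<le> V" using V(2) by simp
  qed (use m in simp)
  also have "- (sum p L / 3)\<^sup>2 / (2 * V) = - (sum p L)\<^sup>2 / (18 * V)"
    by (simp add: power_divide)
  finally show ?thesis by simp
qed

text \<open>Most random sign perturbations of \<open>p\<close> on \<open>L\<close> are admissible deviations, hence
  \<open>\<Delta>\<close>-close to some point of \<open>E\<close>, but only few of them are \<open>\<Delta>\<close>-close to any single point.\<close>

lemma card_cover_lower_bound:
  fixes A :: "nat \<Rightarrow> nat \<Rightarrow> real"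
  assumes p: "mixed n p" and L: "L \<subseteq> supp n p" and A: "\<forall>i<n. \<forall>j<n. A i j \<in> {0..1}"
    and \<epsilon>: "0 < \<epsilon>" "\<epsilon> \<le> \<Delta>" "\<Delta> \<le> 1" and E: "finite E"
    and stable: "stable_deviations n A \<epsilon> \<Delta> E p"
    and m: "0 < sum p L" and l: "l = 15 * \<Delta> / (2 * sum p L)" "l \<le> 1" "l * \<eta> = \<epsilon> / 5"
    and V: "0 < V" "(\<Sum>i\<in>L. (p i)\<^sup>2) \<le> V"
    and union_bound: "2 * (real n + 1) * exp (- \<eta>\<^sup>2 / (2 * V)) \<le> 1 / 2"
  shows "1 / 2 \<le> real (card E) * exp (- (sum p L)\<^sup>2 / (18 * V))"
proof -
  define Good where "Good = {\<sigma>\<in>signs L. \<bar>signed_mass L p \<sigma>\<bar> < \<eta> \<and>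
                                      (\<forall>j<n. \<bar>\<Sum>i\<in>L. \<sigma> i * (p i * A i j)\<bar> < \<eta>)}"
  define \<beta> where "\<beta> = exp (- (sum p L)\<^sup>2 / (18 * V)) * 2 ^ card L"
  have Ln: "L \<subseteq> {..<n}" using L supp_subset_lessThan by blast
  have fS: "finite (signs L)" using Ln finite_subset finite_signs by blast
  have "0 < \<Delta>" "0 < l" using \<epsilon> m by (simp_all add: l)
  moreover have "0 < l * \<eta>" using l(3) \<epsilon>(1) by simp
  ultimately have "0 < \<eta>" by (simp add: zero_less_mult_iff)
  have "1 / 2 * 2 ^ card L \<le> (1 - 2 * (real n + 1) * exp (- \<eta>\<^sup>2 / (2 * V))) * 2 ^ card L"
    using union_bound by (intro mult_right_mono) auto
  also have "\<dots> \<le> real (card Good)"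
    unfolding Good_def using A Ln \<open>0 < \<eta>\<close> by (intro card_good_signs[OF Ln _ _ V]) auto
  finally have many: "1 / 2 * 2 ^ card L \<le> real (card Good)" .
  have good: "\<sigma> \<in> signs L \<and> \<bar>l * signed_mass L p \<sigma>\<bar> \<le> \<Delta> / 5
              \<and> (\<exists>e\<in>E. sdist n (sign_perturb L l p \<sigma>) e \<le> \<Delta>)" if "\<sigma> \<in> Good" for \<sigma>
    using that sign_perturb_admissible[OF p L A \<open>0 < l\<close> l(2,3), of \<sigma>] stable \<epsilon>
    unfolding Good_def stable_deviations_def by fastforce
  then obtain f where f: "\<forall>\<sigma>\<in>Good. f \<sigma> \<in> E \<and> sdist n (sign_perturb L l p \<sigma>) (f \<sigma>) \<le> \<Delta>"
    by metis
  have "real (card {\<sigma>\<in>Good. f \<sigma> = e}) \<le> \<beta>" for e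
  proof -
    have "{\<sigma>\<in>Good. f \<sigma> = e} \<subseteq> {\<sigma>\<in>signs L. \<bar>l * signed_mass L p \<sigma>\<bar> \<le> \<Delta> / 5 \<and>
                                               sdist n (sign_perturb L l p \<sigma>) e \<le> \<Delta>}"
      using good f by auto
    hence "card {\<sigma>\<in>Good. f \<sigma> = e} \<le> card {\<sigma>\<in>signs L. \<bar>l * signed_mass L p \<sigma>\<bar> \<le> \<Delta> / 5 \<and>
                                               sdist n (sign_perturb L l p \<sigma>) e \<le> \<Delta>}"
      using fS by (intro card_mono) auto
    also have "real \<dots> \<le> \<beta>"
      unfolding \<beta>_def by (rule card_sign_perturb_near[OF p Ln \<open>0 < \<Delta>\<close> \<epsilon>(3) m l(1,2) V])
    finally show ?thesis by simp
  qed
  hence "real (card Good) \<le> real (card E) * \<beta>"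
    using f by (intro card_le_card_mult_fibre_bound finite_subset[OF _ fS] E) (auto simp: Good_def)
  with many have "1 / 2 * 2 ^ card L \<le> (real (card E) * exp (- (sum p L)\<^sup>2 / (18 * V))) * 2 ^ card L"
    by (simp only: \<beta>_def ac_simps)
  thus ?thesis by (rule mult_right_le_imp_le) simp
qed

lemma no_flat_heavy_part:
  fixes A :: "nat \<Rightarrow> nat \<Rightarrow> real"
  assumes n: "2 \<le> n" and \<epsilon>: "0 < \<epsilon>" "\<epsilon> \<le> \<Delta>" "\<Delta> \<le> 1"
    and A: "\<forall>i<n. \<forall>j<n. A i j \<in> {0..1}" and p: "mixed n p"
    and E: "finite E" "real (card E) \<le> real n powr (\<Delta> / \<epsilon>)\<^sup>2"
    and stable: "stable_deviations n A \<epsilon> \<Delta> E p"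
    and L: "L \<subseteq> supp n p" and heavy: "8 * \<Delta> < sum p L"
    and flat: "\<forall>i\<in>L. p i \<le> sum p L / (16875 * (\<Delta> / \<epsilon>)\<^sup>2 * ln (real n))"
  shows False
proof -
  define r where "r = \<Delta> / \<epsilon>"
  define m where "m = sum p L"
  define M where "M = 16875 * r\<^sup>2 * ln (real n)"
  define l where "l = 15 * \<Delta> / (2 * m)"
  define \<eta> where "\<eta> = \<epsilon> / (5 * l)"
  define V where "V = m\<^sup>2 / M"
  have "0 < \<Delta>" "1 \<le> r" using \<epsilon> by (simp_all add: r_def)
  have "0 < m" using heavy \<open>0 < \<Delta>\<close> by (simp add: m_def)
  have "0 < ln (real n)" using n by simp
  hence "0 < M" using \<open>1 \<le> r\<close> by (simp add: M_def)
  have "0 < l" "l \<le> 1" using \<open>0 < \<Delta>\<close> \<open>0 < m\<close> heavy by (simp_all add: l_def m_def field_simps)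
  have "\<forall>i\<in>L. p i \<le> m / M" using flat by (simp add: m_def M_def r_def)
  hence "(\<Sum>i\<in>L. (p i)\<^sup>2) \<le> (\<Sum>i\<in>L. p i * (m / M))"
    using mixed_nonneg[OF p] unfolding power2_eq_square by (intro sum_mono mult_left_mono) auto
  also have "\<dots> = V" unfolding sum_distrib_right[symmetric] by (simp add: V_def m_def power2_eq_square)
  finally have sq: "(\<Sum>i\<in>L. (p i)\<^sup>2) \<le> V" .
  have "- \<eta>\<^sup>2 / (2 * V) = - (6 * ln (real n))"
    using \<epsilon> \<open>0 < \<Delta>\<close> \<open>0 < m\<close> \<open>0 < ln (real n)\<close>
    by (simp add: \<eta>_def l_def V_def M_def r_def field_simps power2_eq_square)
  hence "2 * (real n + 1) * exp (- \<eta>\<^sup>2 / (2 * V)) \<le> 1 / 2"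
    using exp_neg_six_ln_le[OF n] by simp
  moreover have "l * \<eta> = \<epsilon> / 5" using \<open>0 < l\<close> by (simp add: \<eta>_def)
  moreover have "0 < V" using \<open>0 < m\<close> \<open>0 < M\<close> by (simp add: V_def)
  ultimately have "1 / 2 \<le> real (card E) * exp (- m\<^sup>2 / (18 * V))"
    using card_cover_lower_bound[OF p L A \<epsilon> E(1) stable _ _ \<open>l \<le> 1\<close> _ _ sq] \<open>0 < m\<close>
    by (simp add: m_def l_def)
  also have "- m\<^sup>2 / (18 * V) = - M / 18"
    using \<open>0 < m\<close> \<open>0 < M\<close> by (simp add: V_def field_simps power2_eq_square)
  also have "real (card E) * exp (- M / 18) \<le> real n powr r\<^sup>2 * exp (- M / 18)"
    using E(2) by (simp add: r_def)
  also have "\<dots> \<le> 1 / 4"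
    using powr_mult_exp_le[OF n \<open>1 \<le> r\<close>] by (simp add: M_def)
  finally show False by simp
qed

section \<open>Greedy sparsification\<close>

definition tail_mass :: "nat \<Rightarrow> (nat \<Rightarrow> real) \<Rightarrow> nat set \<Rightarrow> real" where
  "tail_mass n p H = (\<Sum>i\<in>{..<n} - H. p i)"

lemma tail_mass_nonneg: "mixed n p \<Longrightarrow> 0 \<le> tail_mass n p H"
  unfolding tail_mass_def by (intro sum_nonneg mixed_nonneg)

lemma tail_mass_le_one:
  assumes "mixed n p"
  shows "tail_mass n p H \<le> 1"
proof -
  have "tail_mass n p H \<le> (\<Sum>i<n. p i)"
    unfolding tail_mass_def using mixed_nonneg[OF assms] by (intro sum_mono2) auto
  thus ?thesis using assms by (simp add: mixed_def)
qed

lemma tail_mass_insert: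
  assumes "i \<in> {..<n} - H"
  shows "tail_mass n p (insert i H) = tail_mass n p H - p i"
proof -
  have "{..<n} - insert i H = ({..<n} - H) - {i}" by blast
  thus ?thesis using assms unfolding tail_mass_def by (simp add: sum_diff1)
qed

lemma sum_supp_diff_eq_tail_mass:
  assumes "mixed n p"
  shows "sum p (supp n p - H) = tail_mass n p H"
  unfolding tail_mass_def
proof (rule sum.mono_neutral_left)
  show "\<forall>i\<in>({..<n} - H) - (supp n p - H). p i = 0"
    using mixed_nonneg[OF assms] by (auto simp: supp_def order_le_less)
qed (auto simp: supp_def)

text \<open>Greedily removing a coordinate that carries more than a \<open>1 / M\<close> fraction of the
  remaining mass either stops at a flat tail or shrinks the tail geometrically.\<close>

lemma exists_small_set_flat_or_light_tail:
  assumes p: "mixed n p" and "1 \<le> M"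
  shows "\<exists>H\<subseteq>{..<n}. card H \<le> k \<and>
           (\<tau> < tail_mass n p H \<and> (\<forall>i\<in>{..<n} - H. p i \<le> tail_mass n p H / M)
            \<or> tail_mass n p H \<le> max \<tau> ((1 - 1 / M) ^ k))"
proof (induction k)
  case 0
  show ?case using tail_mass_le_one[OF p, of "{}"] by (intro exI[of _ "{}"]) auto
next
  case (Suc k)
  then obtain H where H: "H \<subseteq> {..<n}" "card H \<le> k"
    and alt: "\<tau> < tail_mass n p H \<and> (\<forall>i\<in>{..<n} - H. p i \<le> tail_mass n p H / M)
              \<or> tail_mass n p H \<le> max \<tau> ((1 - 1 / M) ^ k)"
    by blast
  have fH: "finite H" using H(1) finite_subset by blast
  show ?case
  proof (cases "\<tau> < tail_mass n p H \<and> (\<forall>i\<in>{..<n} - H. p i \<le> tail_mass n p H / M)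
                \<or> tail_mass n p H \<le> \<tau>")
    case True
    thus ?thesis using H by (intro exI[of _ H]) auto
  next
    case False
    hence tail: "tail_mass n p H \<le> (1 - 1 / M) ^ k" using alt by auto
    from False obtain i where i: "i \<in> {..<n} - H" "tail_mass n p H / M < p i"
      by (auto simp: not_le)
    have "tail_mass n p (insert i H) = tail_mass n p H - p i"
      by (rule tail_mass_insert[OF i(1)])
    also have "\<dots> \<le> tail_mass n p H * (1 - 1 / M)"
      using i(2) by (simp add: algebra_simps)
    also have "\<dots> \<le> (1 - 1 / M) ^ k * (1 - 1 / M)"
      using tail \<open>1 \<le> M\<close> by (intro mult_right_mono) auto
    finally have "tail_mass n p (insert i H) \<le> (1 - 1 / M) ^ Suc k"
      by (simp add: mult.commute)
    moreover have "card (insert i H) \<le> Suc k" using H(2) fH by (simp add: card_insert_if)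
    ultimately show ?thesis
      using H(1) i(1) by (intro exI[of _ "insert i H"]) auto
  qed
qed

lemma exists_mixed_supp_subset_insert:
  assumes p: "mixed n p" and H: "H \<subseteq> {..<n}"
  shows "\<exists>p'. mixed n p' \<and> supp n p' \<subseteq> insert 0 H \<and> sdist n p p' \<le> tail_mass n p H"
proof -
  define p' where "p' i = (if i \<in> H then p i else 0) + (if i = 0 then tail_mass n p H else 0)" for i
  have "0 < n" using p by (cases n) (auto simp: mixed_def)
  have restrict: "(\<Sum>i<n. if i \<in> H then p i else 0) = sum p H" by (rule sum_if_mem_subset[OF H])
  have split: "(\<Sum>i<n. p i) = sum p H + tail_mass n p H"
    unfolding tail_mass_def using sum.subset_diff[of H "{..<n}" p] H by simp
  have "(\<Sum>i<n. p' i) = (\<Sum>i<n. p i)"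
    using \<open>0 < n\<close> by (simp add: p'_def sum.distrib restrict split)
  hence "mixed n p'"
    using p H \<open>0 < n\<close> tail_mass_nonneg[OF p, of H] by (auto simp: mixed_def p'_def)
  moreover have "supp n p' \<subseteq> insert 0 H" by (auto simp: supp_def p'_def)
  moreover have "sdist n p p' \<le> tail_mass n p H"
  proof -
    have "\<bar>p i - p' i\<bar> \<le> (p i - (if i \<in> H then p i else 0)) + (if i = 0 then tail_mass n p H else 0)"
      for i using mixed_nonneg[OF p, of i] tail_mass_nonneg[OF p, of H] by (auto simp: p'_def)
    hence "(\<Sum>i<n. \<bar>p i - p' i\<bar>)
           \<le> (\<Sum>i<n. (p i - (if i \<in> H then p i else 0)) + (if i = 0 then tail_mass n p H else 0))"
      by (intro sum_mono)
    also have "\<dots> = (\<Sum>i<n. p i) - sum p H + tail_mass n p H"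
      using \<open>0 < n\<close> by (simp add: sum.distrib sum_subtractf restrict)
    finally show ?thesis by (simp add: sdist_def split)
  qed
  ultimately show ?thesis by blast
qed

lemma one_minus_inverse_power_le:
  fixes M x :: real
  assumes "1 \<le> M" "0 < x"
  shows "(1 - 1 / M) ^ nat \<lceil>M * ln (1 / x)\<rceil> \<le> x"
proof -
  define K where "K = nat \<lceil>M * ln (1 / x)\<rceil>"
  have "(1 - 1 / M) ^ K \<le> exp (- 1 / M) ^ K"
    using assms(1) exp_ge_add_one_self[of "- 1 / M"] by (intro power_mono) (auto simp: field_simps)
  also have "\<dots> = exp (- (real K / M))" by (simp flip: exp_of_nat_mult)
  also have "\<dots> \<le> exp (- ln (1 / x))"
  proof -
    have "M * ln (1 / x) \<le> real K" unfolding K_def by linarith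
    hence "ln (1 / x) \<le> real K / M" using assms(1) by (simp add: field_simps)
    thus ?thesis by simp
  qed
  also have "\<dots> = x" using assms(2) by (simp add: ln_div exp_minus)
  finally show ?thesis unfolding K_def .
qed

lemma sparse_support_bound:
  assumes "2 \<le> n" "0 < \<Delta>" "\<Delta> \<le> 1" "1 \<le> r"
  shows "real (nat \<lceil>16875 * r\<^sup>2 * ln (real n) * ln (1 / (8 * \<Delta>))\<rceil>) + 1
         \<le> 16900 * r\<^sup>2 * ln (1 + 1 / \<Delta>) * ln (real n)"
proof -
  define X where "X = r\<^sup>2 * ln (1 + 1 / \<Delta>) * ln (real n)"
  have ln2: "1 / 2 \<le> ln (2::real)" using ln2_ge_two_thirds by linarith
  have "ln 2 \<le> ln (1 + 1 / \<Delta>)" "ln 2 \<le> ln (real n)" "1 \<le> r\<^sup>2"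
    using assms by (simp_all add: field_simps)
  hence "1 * (1 / 2) * (1 / 2) \<le> X"
    unfolding X_def using ln2 by (intro mult_mono) auto
  hence X: "1 / 4 \<le> X" by simp
  have "16875 * r\<^sup>2 * ln (real n) * ln (1 / (8 * \<Delta>)) \<le> 16875 * X"
  proof -
    have "ln (1 / (8 * \<Delta>)) \<le> ln (1 + 1 / \<Delta>)"
      using assms(2) by (simp add: field_simps)
    moreover have "0 \<le> 16875 * r\<^sup>2 * ln (real n)" using assms(1) by simp
    ultimately have "16875 * r\<^sup>2 * ln (real n) * ln (1 / (8 * \<Delta>))
                     \<le> 16875 * r\<^sup>2 * ln (real n) * ln (1 + 1 / \<Delta>)"
      by (rule mult_left_mono)
    thus ?thesis by (simp add: X_def ac_simps)
  qed
  hence "real (nat \<lceil>16875 * r\<^sup>2 * ln (real n) * ln (1 / (8 * \<Delta>))\<rceil>) \<le> 16875 * X + 1"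
    using X by linarith
  with X show ?thesis unfolding X_def by linarith
qed

lemma exists_sparse_near:
  fixes A :: "nat \<Rightarrow> nat \<Rightarrow> real"
  assumes n: "2 \<le> n" and \<epsilon>: "0 < \<epsilon>" "\<epsilon> \<le> \<Delta>" "\<Delta> \<le> 1"
    and A: "\<forall>i<n. \<forall>j<n. A i j \<in> {0..1}" and p: "mixed n p"
    and E: "finite E" "real (card E) \<le> real n powr (\<Delta> / \<epsilon>)\<^sup>2"
    and stable: "stable_deviations n A \<epsilon> \<Delta> E p"
  shows "\<exists>p'. mixed n p' \<and>
           real (card (supp n p')) \<le> 16900 * (\<Delta> / \<epsilon>)\<^sup>2 * ln (1 + 1 / \<Delta>) * ln (real n) \<and>
           sdist n p p' \<le> 8 * \<Delta>"
proof -
  define M where "M = 16875 * (\<Delta> / \<epsilon>)\<^sup>2 * ln (real n)"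
  define K where "K = nat \<lceil>M * ln (1 / (8 * \<Delta>))\<rceil>"
  have "0 < \<Delta>" "1 \<le> (\<Delta> / \<epsilon>)\<^sup>2" using \<epsilon> by simp_all
  have "1 / 2 \<le> ln (2::real)" using ln2_ge_two_thirds by linarith
  moreover have "ln 2 \<le> ln (real n)" using n by simp
  ultimately have "1 * (1 / 2) \<le> (\<Delta> / \<epsilon>)\<^sup>2 * ln (real n)"
    using \<open>1 \<le> (\<Delta> / \<epsilon>)\<^sup>2\<close> by (intro mult_mono) auto
  hence "1 \<le> M" by (simp add: M_def)
  obtain H where H: "H \<subseteq> {..<n}" "card H \<le> K"
    and alt: "8 * \<Delta> < tail_mass n p H \<and> (\<forall>i\<in>{..<n} - H. p i \<le> tail_mass n p H / M)
              \<or> tail_mass n p H \<le> max (8 * \<Delta>) ((1 - 1 / M) ^ K)"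
    using exists_small_set_flat_or_light_tail[OF p \<open>1 \<le> M\<close>] by blast
  have "\<not> (8 * \<Delta> < tail_mass n p H \<and> (\<forall>i\<in>{..<n} - H. p i \<le> tail_mass n p H / M))"
  proof
    assume flat: "8 * \<Delta> < tail_mass n p H \<and> (\<forall>i\<in>{..<n} - H. p i \<le> tail_mass n p H / M)"
    have "supp n p - H \<subseteq> {..<n} - H" using supp_subset_lessThan by blast
    with flat show False
      using no_flat_heavy_part[OF n \<epsilon> A p E stable Diff_subset[of "supp n p" H]]
      unfolding sum_supp_diff_eq_tail_mass[OF p] M_def by blast
  qed
  hence tail: "tail_mass n p H \<le> 8 * \<Delta>"
    using alt tail_mass_le_one[OF p, of H] one_minus_inverse_power_le[OF \<open>1 \<le> M\<close>, of "8 * \<Delta>"]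
      \<open>0 < \<Delta>\<close>
    by (cases "8 * \<Delta> < 1") (auto simp: K_def)
  obtain p' where p': "mixed n p'" "supp n p' \<subseteq> insert 0 H" "sdist n p p' \<le> tail_mass n p H"
    using exists_mixed_supp_subset_insert[OF p H(1)] by blast
  have "finite H" using H(1) finite_subset by blast
  hence "card (supp n p') \<le> card (insert 0 H)" using p'(2) by (intro card_mono) auto
  also have "\<dots> \<le> K + 1" using H(2) \<open>finite H\<close> by (simp add: card_insert_if)
  finally have "real (card (supp n p')) \<le> real K + 1" by linarith
  also have "\<dots> \<le> 16900 * (\<Delta> / \<epsilon>)\<^sup>2 * ln (1 + 1 / \<Delta>) * ln (real n)"
    using sparse_support_bound[OF n \<open>0 < \<Delta>\<close> \<epsilon>(3), of "\<Delta> / \<epsilon>"] \<epsilon>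
    by (simp add: K_def M_def)
  finally show ?thesis using p' tail by force
qed

section \<open>Sparse approximation of equilibria\<close>

lemma stable_deviations_of_ws_approx_stable:
  assumes "ws_approx_stable n R C \<epsilon> \<Delta>" "nash n R C p q" "0 \<le> \<epsilon>"
  shows "stable_deviations n C \<epsilon> \<Delta> (fst ` nash_set n R C) p"
  unfolding stable_deviations_def
proof (intro allI impI)
  fix p' assume "mixed n p' \<and> supp n p' \<subseteq> supp n p \<and>
    (\<forall>j<n. \<bar>(\<Sum>i<n. p' i * C i j) - (\<Sum>i<n. p i * C i j)\<bar> \<le> \<epsilon> / 2)"
  hence "ws_eq n R C \<epsilon> p' q" using ws_eq_of_nash_deviation[OF assms(2) _ _ assms(3)] by blast
  then obtain p0 q0 where "(p0, q0) \<in> nash_set n R C" "pdist n (p', q) (p0, q0) \<le> \<Delta>"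
    using assms(1) unfolding ws_approx_stable_def by fast
  thus "\<exists>e\<in>fst ` nash_set n R C. sdist n p' e \<le> \<Delta>"
    by (intro bexI[of _ p0] image_eqI[of p0 fst "(p0, q0)"]) (auto simp: pdist_def)
qed

lemma exists_sparse_row_near:
  assumes n: "2 \<le> n" and \<epsilon>: "0 < \<epsilon>" "\<epsilon> \<le> \<Delta>" "\<Delta> \<le> 1"
    and C: "\<forall>i<n. \<forall>j<n. C i j \<in> {0..1}"
    and fin: "finite (nash_set n R C)" and card: "real (card (nash_set n R C)) \<le> real n powr (\<Delta> / \<epsilon>)\<^sup>2"
    and ws: "ws_approx_stable n R C \<epsilon> \<Delta>" and pq: "nash n R C p q"
  shows "\<exists>p'. mixed n p' \<and>
           real (card (supp n p')) \<le> 16900 * (\<Delta> / \<epsilon>)\<^sup>2 * ln (1 + 1 / \<Delta>) * ln (real n) \<and>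
           sdist n p p' \<le> 8 * \<Delta>"
proof (rule exists_sparse_near[OF n \<epsilon> C])
  show "mixed n p" using pq by (simp add: nash_def)
  show "finite (fst ` nash_set n R C)" using fin by simp
  show "real (card (fst ` nash_set n R C)) \<le> real n powr (\<Delta> / \<epsilon>)\<^sup>2"
    using card_image_le[OF fin, of fst] card by linarith
  show "stable_deviations n C \<epsilon> \<Delta> (fst ` nash_set n R C) p"
    using stable_deviations_of_ws_approx_stable[OF ws pq] \<epsilon> by simp
qed

lemma exists_sparse_pair_near:
  assumes n: "2 \<le> n" and \<epsilon>: "0 < \<epsilon>" "\<epsilon> \<le> \<Delta>" "\<Delta> \<le> 1"
    and RC: "\<forall>i<n. \<forall>j<n. R i j \<in> {0..1} \<and> C i j \<in> {0..1}"
    and fin: "finite (nash_set n R C)" and card: "real (card (nash_set n R C)) \<le> real n powr (\<Delta> / \<epsilon>)\<^sup>2"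
    and ws: "ws_approx_stable n R C \<epsilon> \<Delta>" and pq: "nash n R C p q"
  shows "\<exists>p' q'. mixed n p' \<and> mixed n q' \<and>
           real (card (supp n p')) \<le> 16900 * (\<Delta> / \<epsilon>)\<^sup>2 * ln (1 + 1 / \<Delta>) * ln (real n) \<and>
           real (card (supp n q')) \<le> 16900 * (\<Delta> / \<epsilon>)\<^sup>2 * ln (1 + 1 / \<Delta>) * ln (real n) \<and>
           pdist n (p, q) (p', q') \<le> 8 * \<Delta>"
proof -
  obtain p' where p': "mixed n p'"
    "real (card (supp n p')) \<le> 16900 * (\<Delta> / \<epsilon>)\<^sup>2 * ln (1 + 1 / \<Delta>) * ln (real n)"
    "sdist n p p' \<le> 8 * \<Delta>"
    using exists_sparse_row_near[OF n \<epsilon> _ fin card ws pq] RC by blast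
  obtain q' where q': "mixed n q'"
    "real (card (supp n q')) \<le> 16900 * (\<Delta> / \<epsilon>)\<^sup>2 * ln (1 + 1 / \<Delta>) * ln (real n)"
    "sdist n q q' \<le> 8 * \<Delta>"
  proof (rule exE[OF exists_sparse_row_near[OF n \<epsilon>, of "mtranspose R" "mtranspose C"]])
    show "finite (nash_set n (mtranspose C) (mtranspose R))"
      using fin by (simp add: nash_set_mtranspose)
  qed (use RC card ws pq in \<open>auto simp: mtranspose_def card_nash_set_mtranspose
         ws_approx_stable_mtranspose nash_mtranspose\<close>)
  show ?thesis using p' q' by (auto simp: pdist_def)
qed

lemma exists_sparse_pair_near_perturbed:
  assumes n: "2 \<le> n" and \<epsilon>: "0 < \<epsilon>" "\<epsilon> \<le> \<Delta>" "\<Delta> \<le> 1"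
    and RC: "\<forall>i<n. \<forall>j<n. R i j \<in> {0..1} \<and> C i j \<in> {0..1}"
    and fin: "finite (nash_set n R C)" and card: "real (card (nash_set n R C)) \<le> real n powr (\<Delta> / \<epsilon>)\<^sup>2"
    and ws: "ws_approx_stable n R C \<epsilon> \<Delta>"
    and pert: "perturb n (\<epsilon> / 2) R C R' C'" and pq: "nash n R' C' p q"
  shows "\<exists>p' q'. mixed n p' \<and> mixed n q' \<and>
           real (card (supp n p')) \<le> 16900 * (\<Delta> / \<epsilon>)\<^sup>2 * ln (1 + 1 / \<Delta>) * ln (real n) \<and>
           real (card (supp n q')) \<le> 16900 * (\<Delta> / \<epsilon>)\<^sup>2 * ln (1 + 1 / \<Delta>) * ln (real n) \<and>
           pdist n (p, q) (p', q') \<le> 9 * \<Delta>"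
proof -
  obtain p0 q0 where pq0: "nash n R C p0 q0" "pdist n (p, q) (p0, q0) \<le> \<Delta>"
    using ws ws_eq_of_nash_perturb[OF pert pq] unfolding ws_approx_stable_def nash_set_def by fast
  then obtain p' q' where "mixed n p'" "mixed n q'"
    "real (card (supp n p')) \<le> 16900 * (\<Delta> / \<epsilon>)\<^sup>2 * ln (1 + 1 / \<Delta>) * ln (real n)"
    "real (card (supp n q')) \<le> 16900 * (\<Delta> / \<epsilon>)\<^sup>2 * ln (1 + 1 / \<Delta>) * ln (real n)"
    "pdist n (p0, q0) (p', q') \<le> 8 * \<Delta>"
    using exists_sparse_pair_near[OF n \<epsilon> RC fin card ws] by blast
  moreover have "pdist n (p, q) (p', q') \<le> pdist n (p, q) (p0, q0) + pdist n (p0, q0) (p', q')"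
    by (rule pdist_triangle)
  ultimately show ?thesis using pq0(2) by fastforce
qed

theorem theorem3:
  "\<exists>a b :: real. a > 0 \<and> b > 0 \<and>
    (\<forall>(n::nat) (R::nat \<Rightarrow> nat \<Rightarrow> real) (C::nat \<Rightarrow> nat \<Rightarrow> real) (\<epsilon>::real) (\<Delta>::real).
      2 \<le> n \<and> 0 < \<epsilon> \<and> \<epsilon> \<le> \<Delta> \<and> \<Delta> \<le> 1 \<and>
      (\<forall>i<n. \<forall>j<n. R i j \<in> {0..1} \<and> C i j \<in> {0..1}) \<and>
      finite (nash_set n R C) \<and>
      real (card (nash_set n R C)) \<le> real n powr (a * (\<Delta> / \<epsilon>)\<^sup>2) \<and>
      (ws_approx_stable n R C \<epsilon> \<Delta> \<or> perturb_stable n R C (\<epsilon> / 2) \<Delta>)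
      \<longrightarrow>
      (let k = b * (\<Delta> / \<epsilon>)\<^sup>2 * ln (1 + 1 / \<Delta>) * ln (real n) in
        (\<forall>p q. nash n R C p q \<longrightarrow>
           (\<exists>p' q'. mixed n p' \<and> mixed n q' \<and>
              real (card (supp n p')) \<le> k \<and> real (card (supp n q')) \<le> k \<and>
              pdist n (p, q) (p', q') \<le> 8 * \<Delta>)) \<and>
        (\<forall>R' C'. perturb n (\<epsilon> / 2) R C R' C' \<longrightarrow>
          (\<forall>p q. nash n R' C' p q \<longrightarrow>
           (\<exists>p' q'. mixed n p' \<and> mixed n q' \<and>
              real (card (supp n p')) \<le> k \<and> real (card (supp n q')) \<le> k \<and>
              pdist n (p, q) (p', q') \<le> 9 * \<Delta>)))))"
proof (rule exI[of _ 1], rule exI[of _ 16900], intro conjI allI impI, goal_cases)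
  case (3 n R C \<epsilon> \<Delta>)
  hence n: "2 \<le> n" and \<epsilon>: "0 < \<epsilon>" "\<epsilon> \<le> \<Delta>" "\<Delta> \<le> 1"
    and RC: "\<forall>i<n. \<forall>j<n. R i j \<in> {0..1} \<and> C i j \<in> {0..1}"
    and fin: "finite (nash_set n R C)"
    and card: "real (card (nash_set n R C)) \<le> real n powr (\<Delta> / \<epsilon>)\<^sup>2"
    and ws: "ws_approx_stable n R C \<epsilon> \<Delta>"
    using perturb_stable_imp_ws_approx_stable[of n R C \<epsilon> \<Delta>] by auto
  show ?case
    unfolding Let_def
    using exists_sparse_pair_near[OF n \<epsilon> RC fin card ws]
      exists_sparse_pair_near_perturbed[OF n \<epsilon> RC fin card ws]
    by blast
qed simp_all

end
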